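(* Let $\theta>0$, $a>0$, $\mu\in\mathbb{R}$, $\Delta>0$, and set $b(s)=-\theta(s-\mu)$ and $\hat\sigma(s)=\sqrt{2\theta a(s^2+1)}$. Let $W\sim N(0,\Delta)$ and define, for a real random variable $S$ independent of $W$, the random variable $\mathcal{A}S=S+\Delta\, b(S)+\hat\sigma(S)\,W$. If $S_1,S_2$ are real random variables independent of $W$ (with finite first moments) such that $\mathbb{E}h(S_1)\le \mathbb{E}h(S_2)$ for every convex $h:\mathbb{R}\to\mathbb{R}$, then $\mathbb{E}h(\mathcal{A}S_1)\le \mathbb{E}h(\mathcal{A}S_2)$ for every convex $h:\mathbb{R}\to\mathbb{R}$.
   Context: Expectations of convex functions are allowed to take the value $+\infty$. *)

theory Defs
  imports "HOL-Probability.Probability"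
begin

text \<open>Extended-real expectation: positive part minus negative part, so that the
value may be \<open>+\<infinity>\<close> (the convention of the paper for convex functions).\<close>
definition ext_expectation :: "'a measure \<Rightarrow> ('a \<Rightarrow> real) \<Rightarrow> ereal" where
  "ext_expectation M X =
     enn2ereal (\<integral>\<^sup>+ x. ennreal (X x) \<partial>M) - enn2ereal (\<integral>\<^sup>+ x. ennreal (- X x) \<partial>M)"

definition drift_b :: "real \<Rightarrow> real \<Rightarrow> real \<Rightarrow> real" where
  "drift_b \<theta> \<mu> s = - \<theta> * (s - \<mu>)"

definition sigma_hat :: "real \<Rightarrow> real \<Rightarrow> real \<Rightarrow> real" where
  "sigma_hat \<theta> a s = sqrt (2 * \<theta> * a * (s\<^sup>2 + 1))"

definition step_op :: "real \<Rightarrow> real \<Rightarrow> real \<Rightarrow> real \<Rightarrow> ('w \<Rightarrow> real) \<Rightarrow> ('w \<Rightarrow> real) \<Rightarrow> 'w \<Rightarrow> real" where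
  "step_op \<theta> a \<mu> \<Delta> W S = (\<lambda>\<omega>. S \<omega> + \<Delta> * drift_b \<theta> \<mu> (S \<omega>) + sigma_hat \<theta> a (S \<omega>) * W \<omega>)"

end

theory Submission
  imports Defs
begin

text \<open>Every convex \<open>h\<close> is an affine function plus a nonnegative convex \<open>k\<close>. The affine part is
handled by the means, which the convex order forces to agree and which \<open>\<A>\<close> maps by the
same affine map since \<open>W\<close> is centred and independent of \<open>S\<close>. For the nonnegative part one
conditions on \<open>S\<close>: \<open>\<bbbE> k(\<A>S) = \<bbbE> g(S)\<close> with \<open>g(s) = \<bbbE> k(s + \<Delta> b(s) + \<sigma>(s) W)\<close>. Since
\<open>(x, y) \<mapsto> \<bbbE> k(x + y W)\<close> is jointly convex and, by the symmetry of \<open>W\<close>, even in \<open>y\<close>, it is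
nondecreasing in \<open>y \<ge> 0\<close>; as \<open>\<sigma>\<close> is convex and nonnegative and \<open>b\<close> is affine, \<open>g\<close> is convex,
so \<open>\<bbbE> g(S\<^sub>1) \<le> \<bbbE> g(S\<^sub>2)\<close>. To keep \<open>g\<close> finite, \<open>k(x + y W)\<close> is averaged only over \<open>|W| \<le> n\<close>
and one passes to the limit \<open>n \<rightarrow> \<infinity>\<close> by monotone convergence.\<close>

definition convex_order_le :: "'a measure \<Rightarrow> ('a \<Rightarrow> real) \<Rightarrow> ('a \<Rightarrow> real) \<Rightarrow> bool" where
  "convex_order_le M X Y \<longleftrightarrow> (\<forall>h. convex_on UNIV h \<longrightarrow>
     ext_expectation M (\<lambda>\<omega>. h (X \<omega>)) \<le> ext_expectation M (\<lambda>\<omega>. h (Y \<omega>)))"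

lemma ext_expectation_nonneg_add_integrable:
  assumes [measurable]: "f \<in> borel_measurable M" "k \<in> borel_measurable M"
    and k_nonneg: "\<And>x. 0 \<le> k x" and L: "integrable M L"
    and f_eq: "\<And>x. x \<in> space M \<Longrightarrow> f x = k x + L x"
  shows "ext_expectation M f = enn2ereal (\<integral>\<^sup>+x. k x \<partial>M) + ereal (\<integral>x. L x \<partial>M)"
proof -
  have [measurable]: "L \<in> borel_measurable M" using L by auto
  have L_fin: "(\<integral>\<^sup>+x. ennreal (norm (L x)) \<partial>M) < \<infinity>"
    using L by (simp add: integrable_iff_bounded)
  have "(\<integral>\<^sup>+x. ennreal (- f x) \<partial>M) \<le> (\<integral>\<^sup>+x. ennreal (norm (L x)) \<partial>M)"
    using f_eq k_nonneg by (intro nn_integral_mono ennreal_leI) (smt (verit) real_norm_def)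
  with L_fin obtain q where q: "(\<integral>\<^sup>+x. ennreal (- f x) \<partial>M) = ennreal q" "q \<ge> 0"
    by (cases "(\<integral>\<^sup>+x. ennreal (- f x) \<partial>M)" rule: ennreal_cases) auto
  show ?thesis
  proof (cases "(\<integral>\<^sup>+x. k x \<partial>M) = \<infinity>")
    case True
    have "(\<integral>\<^sup>+x. k x \<partial>M) \<le> (\<integral>\<^sup>+x. ennreal (f x) + ennreal (norm (L x)) \<partial>M)"
    proof (intro nn_integral_mono)
      fix x assume x: "x \<in> space M"
      have "ennreal (k x) \<le> ennreal (max (f x) 0 + norm (L x))"
        using f_eq[OF x] k_nonneg[of x] by (intro ennreal_leI) (auto simp: max_def)
      also have "\<dots> = ennreal (max (f x) 0) + ennreal (norm (L x))"
        by (rule ennreal_plus) auto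
      also have "ennreal (max (f x) 0) = ennreal (f x)"
        by (cases "f x \<ge> 0") (auto simp: max_def ennreal_neg)
      finally show "ennreal (k x) \<le> ennreal (f x) + ennreal (norm (L x))" .
    qed
    also have "\<dots> = (\<integral>\<^sup>+x. ennreal (f x) \<partial>M) + (\<integral>\<^sup>+x. ennreal (norm (L x)) \<partial>M)"
      by (rule nn_integral_add) auto
    finally have "(\<integral>\<^sup>+x. ennreal (f x) \<partial>M) = \<infinity>"
      using True L_fin by (auto simp: top_unique ennreal_add_eq_top)
    then show ?thesis unfolding ext_expectation_def True q by simp
  next
    case False
    then obtain c where c: "(\<integral>\<^sup>+x. k x \<partial>M) = ennreal c" "c \<ge> 0"
      by (cases "(\<integral>\<^sup>+x. k x \<partial>M)" rule: ennreal_cases) auto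
    have k_int: "integrable M k"
      by (rule integrableI_nn_integral_finite[OF _ _ c(1)]) (auto simp: k_nonneg)
    have "(\<integral>x. k x \<partial>M) = c"
      using nn_integral_eq_integral[OF k_int] k_nonneg c by auto
    moreover have f_int: "integrable M f"
      using Bochner_Integration.integrable_add[OF k_int L]
      by (simp add: Bochner_Integration.integrable_cong[OF refl f_eq])
    moreover have "(\<integral>x. f x \<partial>M) = (\<integral>x. k x \<partial>M) + (\<integral>x. L x \<partial>M)"
      using Bochner_Integration.integral_cong[of M M f "\<lambda>x. k x + L x"] f_eq
        Bochner_Integration.integral_add[OF k_int L] by simp
    moreover obtain p where p: "(\<integral>\<^sup>+x. ennreal (f x) \<partial>M) = ennreal p" "p \<ge> 0"
      using f_int by (cases "(\<integral>\<^sup>+x. ennreal (f x) \<partial>M)" rule: ennreal_cases)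
        (auto simp: real_integrable_def)
    ultimately show ?thesis
      using real_lebesgue_integral_def[OF f_int] c q
      unfolding ext_expectation_def p by (simp add: enn2ereal_ennreal)
  qed
qed

lemma ext_expectation_integrable:
  "integrable M f \<Longrightarrow> ext_expectation M f = ereal (\<integral>x. f x \<partial>M)"
  using ext_expectation_nonneg_add_integrable[of f M "\<lambda>_. 0" f] by (auto simp: zero_ennreal.rep_eq)

lemma ext_expectation_nonneg:
  "f \<in> borel_measurable M \<Longrightarrow> (\<And>x. 0 \<le> f x) \<Longrightarrow> ext_expectation M f = enn2ereal (\<integral>\<^sup>+x. f x \<partial>M)"
  using ext_expectation_nonneg_add_integrable[of f M f "\<lambda>_. 0"] by auto

lemma convex_on_real_supporting_line:
  fixes h :: "real \<Rightarrow> real"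
  assumes "convex_on UNIV h"
  obtains c where "\<And>t. h 0 + c * t \<le> h t"
  using convex_le_Inf_differential[OF assms, of 0] by auto

lemma convex_on_real_borel_measurable:
  fixes h :: "real \<Rightarrow> real"
  shows "convex_on UNIV h \<Longrightarrow> h \<in> borel_measurable borel"
  by (intro borel_measurable_continuous_onI convex_on_continuous) auto

lemma convex_order_le_integral_eq:
  assumes "convex_order_le M X Y" "integrable M X" "integrable M Y"
  shows "(\<integral>\<omega>. X \<omega> \<partial>M) = (\<integral>\<omega>. Y \<omega> \<partial>M)"
proof -
  have "convex_on UNIV (\<lambda>x::real. c * x)" for c
    by (simp add: convex_on_alt algebra_simps)
  then have "ereal (\<integral>\<omega>. c * X \<omega> \<partial>M) \<le> ereal (\<integral>\<omega>. c * Y \<omega> \<partial>M)" for c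
    using assms(1) unfolding convex_order_le_def
    by (metis assms(2,3) ext_expectation_integrable integrable_mult_right)
  from this[of 1] this[of "-1"] show ?thesis by simp
qed

lemma convex_order_le_nn_integral:
  assumes "convex_order_le M X Y" and [measurable]: "X \<in> borel_measurable M" "Y \<in> borel_measurable M"
    and k: "convex_on UNIV k" "\<And>t. 0 \<le> k t"
  shows "(\<integral>\<^sup>+\<omega>. k (X \<omega>) \<partial>M) \<le> (\<integral>\<^sup>+\<omega>. k (Y \<omega>) \<partial>M)"
proof -
  note [measurable] = convex_on_real_borel_measurable[OF k(1)]
  have "ext_expectation M (\<lambda>\<omega>. k (X \<omega>)) \<le> ext_expectation M (\<lambda>\<omega>. k (Y \<omega>))"
    using assms by (auto simp: convex_order_le_def)
  then show ?thesis
    by (simp add: ext_expectation_nonneg k(2) less_eq_ennreal.rep_eq)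
qed

lemma (in prob_space) convex_order_leI:
  assumes X: "integrable M X" and Y: "integrable M Y"
    and means: "(\<integral>\<omega>. X \<omega> \<partial>M) = (\<integral>\<omega>. Y \<omega> \<partial>M)"
    and nonneg: "\<And>k. convex_on UNIV k \<Longrightarrow> (\<And>t. 0 \<le> k t) \<Longrightarrow>
                   (\<integral>\<^sup>+\<omega>. k (X \<omega>) \<partial>M) \<le> (\<integral>\<^sup>+\<omega>. k (Y \<omega>) \<partial>M)"
  shows "convex_order_le M X Y"
  unfolding convex_order_le_def
proof (intro allI impI)
  fix h :: "real \<Rightarrow> real" assume h: "convex_on UNIV h"
  obtain c where c: "\<And>t. h 0 + c * t \<le> h t"
    using convex_on_real_supporting_line[OF h] by blast
  define k where "k t = h t - (h 0 + c * t)" for t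
  have k_nonneg: "0 \<le> k t" for t using c[of t] by (simp add: k_def)
  have "convex_on UNIV k"
    using h unfolding k_def convex_on_alt by (simp add: algebra_simps)
  note [measurable] = convex_on_real_borel_measurable[OF h] convex_on_real_borel_measurable[OF this]
  have split: "ext_expectation M (\<lambda>\<omega>. h (Z \<omega>))
      = enn2ereal (\<integral>\<^sup>+\<omega>. k (Z \<omega>) \<partial>M) + ereal (h 0 + c * (\<integral>\<omega>. Z \<omega> \<partial>M))"
    if Z: "integrable M Z" for Z
  proof -
    have [measurable]: "Z \<in> borel_measurable M" using Z by auto
    have "ext_expectation M (\<lambda>\<omega>. h (Z \<omega>))
        = enn2ereal (\<integral>\<^sup>+\<omega>. k (Z \<omega>) \<partial>M) + ereal (\<integral>\<omega>. h 0 + c * Z \<omega> \<partial>M)"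
      using Z by (intro ext_expectation_nonneg_add_integrable) (auto simp: k_nonneg k_def c)
    then show ?thesis using Z by (simp add: prob_space)
  qed
  show "ext_expectation M (\<lambda>\<omega>. h (X \<omega>)) \<le> ext_expectation M (\<lambda>\<omega>. h (Y \<omega>))"
    unfolding split[OF X] split[OF Y] means
    using nonneg[OF \<open>convex_on UNIV k\<close> k_nonneg]
    by (intro add_right_mono) (simp add: less_eq_ennreal.rep_eq[symmetric])
qed

lemma convex_on_sqrt_square_plus_one: "convex_on UNIV (\<lambda>s::real. sqrt (s\<^sup>2 + 1))"
proof -
  have scale: "sqrt ((t * z)\<^sup>2 + t\<^sup>2) = t * sqrt (z\<^sup>2 + 1)" if "0 \<le> t" for t z :: real
  proof -
    have "(t * z)\<^sup>2 + t\<^sup>2 = t\<^sup>2 * (z\<^sup>2 + 1)" by (simp add: algebra_simps power_mult_distrib)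
    then show ?thesis using that by (simp add: real_sqrt_mult)
  qed
  have "sqrt ((l * x + (1 - l) * y)\<^sup>2 + 1) \<le> l * sqrt (x\<^sup>2 + 1) + (1 - l) * sqrt (y\<^sup>2 + 1)"
    if "0 \<le> l" "l \<le> 1" for l x y :: real
  proof -
    have "sqrt ((l * x + (1 - l) * y)\<^sup>2 + 1) = sqrt ((l * x + (1 - l) * y)\<^sup>2 + (l + (1 - l))\<^sup>2)"
      by simp
    also have "\<dots> \<le> sqrt ((l * x)\<^sup>2 + l\<^sup>2) + sqrt (((1 - l) * y)\<^sup>2 + (1 - l)\<^sup>2)"
      by (rule real_sqrt_sum_squares_triangle_ineq)
    also have "\<dots> = l * sqrt (x\<^sup>2 + 1) + (1 - l) * sqrt (y\<^sup>2 + 1)"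
      using that by (simp add: scale)
    finally show ?thesis .
  qed
  then show ?thesis unfolding convex_on_alt by simp
qed

lemma sigma_hat_eq: "sigma_hat \<theta> a s = sqrt (2 * \<theta> * a) * sqrt (s\<^sup>2 + 1)"
  unfolding sigma_hat_def by (simp add: real_sqrt_mult)

lemma sigma_hat_nonneg: "0 \<le> \<theta> * a \<Longrightarrow> 0 \<le> sigma_hat \<theta> a s"
  unfolding sigma_hat_eq by simp

lemma sigma_hat_le: "0 \<le> \<theta> * a \<Longrightarrow> sigma_hat \<theta> a s \<le> sqrt (2 * \<theta> * a) * (\<bar>s\<bar> + 1)"
  unfolding sigma_hat_eq using sqrt_sum_squares_le_sum_abs[of s 1]
  by (intro mult_left_mono) auto

lemma convex_on_sigma_hat: "0 \<le> \<theta> * a \<Longrightarrow> convex_on UNIV (sigma_hat \<theta> a)"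
  unfolding sigma_hat_eq[abs_def] by (intro convex_on_cmul convex_on_sqrt_square_plus_one) simp

definition trunc_mean :: "'a measure \<Rightarrow> ('a \<Rightarrow> real) \<Rightarrow> (real \<Rightarrow> real) \<Rightarrow> nat \<Rightarrow> real \<Rightarrow> real \<Rightarrow> real"
  where "trunc_mean M W k n x y = (\<integral>\<omega>. indicator {- real n..real n} (W \<omega>) * k (x + y * W \<omega>) \<partial>M)"

context
  fixes M :: "'a measure" and W :: "'a \<Rightarrow> real" and k :: "real \<Rightarrow> real"
  assumes finite_M: "finite_measure M" and W_meas [measurable]: "W \<in> borel_measurable M"
    and k_convex: "convex_on UNIV k"
begin

lemma integrable_trunc_mean:
  "integrable M (\<lambda>\<omega>. indicator {- real n..real n} (W \<omega>) * k (x + y * W \<omega>))"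
proof -
  interpret finite_measure M by (rule finite_M)
  note k_meas [measurable] = convex_on_real_borel_measurable[OF k_convex]
  have "continuous_on UNIV k" by (rule convex_on_continuous[OF open_UNIV k_convex])
  then have "compact (k ` {x - \<bar>y\<bar> * n .. x + \<bar>y\<bar> * n})"
    by (intro compact_continuous_image continuous_on_subset[OF \<open>continuous_on UNIV k\<close>]) auto
  then obtain B where B: "\<And>t. t \<in> {x - \<bar>y\<bar> * n .. x + \<bar>y\<bar> * n} \<Longrightarrow> norm (k t) \<le> B"
    using compact_imp_bounded bounded_iff by (metis image_eqI)
  have "norm (indicator {- real n..real n} w * k (x + y * w)) \<le> max B 0" for w
  proof (cases "w \<in> {- real n..real n}")
    case True
    then have "\<bar>y * w\<bar> \<le> \<bar>y\<bar> * n" by (auto simp: abs_mult intro!: mult_left_mono)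
    then have "x + y * w \<in> {x - \<bar>y\<bar> * n .. x + \<bar>y\<bar> * n}" by auto
    then show ?thesis using True B by fastforce
  qed simp
  then show ?thesis by (intro integrable_const_bound[where B = "max B 0"]) auto
qed

lemma trunc_mean_nonneg: "(\<And>t. 0 \<le> k t) \<Longrightarrow> 0 \<le> trunc_mean M W k n x y"
  unfolding trunc_mean_def by (intro Bochner_Integration.integral_nonneg) auto

lemma trunc_mean_convex:
  assumes "0 \<le> l" "l \<le> 1"
  shows "trunc_mean M W k n (l * x1 + (1 - l) * x2) (l * y1 + (1 - l) * y2)
    \<le> l * trunc_mean M W k n x1 y1 + (1 - l) * trunc_mean M W k n x2 y2"
proof -
  let ?I = "indicator {- real n..real n} :: real \<Rightarrow> real"
  have "trunc_mean M W k n (l * x1 + (1 - l) * x2) (l * y1 + (1 - l) * y2) \<le>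
      (\<integral>\<omega>. l * (?I (W \<omega>) * k (x1 + y1 * W \<omega>)) + (1 - l) * (?I (W \<omega>) * k (x2 + y2 * W \<omega>)) \<partial>M)"
    unfolding trunc_mean_def
  proof (intro integral_mono integrable_trunc_mean Bochner_Integration.integrable_add
      integrable_mult_right)
    fix \<omega>
    have "k (l * x1 + (1 - l) * x2 + (l * y1 + (1 - l) * y2) * W \<omega>)
        = k (l * (x1 + y1 * W \<omega>) + (1 - l) * (x2 + y2 * W \<omega>))"
      by (simp add: algebra_simps)
    also have "\<dots> \<le> l * k (x1 + y1 * W \<omega>) + (1 - l) * k (x2 + y2 * W \<omega>)"
      using convex_onD[OF k_convex, of "1 - l" "x1 + y1 * W \<omega>" "x2 + y2 * W \<omega>"] assms by simp
    finally show "?I (W \<omega>) * k (l * x1 + (1 - l) * x2 + (l * y1 + (1 - l) * y2) * W \<omega>)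
        \<le> l * (?I (W \<omega>) * k (x1 + y1 * W \<omega>)) + (1 - l) * (?I (W \<omega>) * k (x2 + y2 * W \<omega>))"
      by (auto simp: indicator_def algebra_simps)
  qed
  also have "\<dots> = l * trunc_mean M W k n x1 y1 + (1 - l) * trunc_mean M W k n x2 y2"
    unfolding trunc_mean_def
    by (subst Bochner_Integration.integral_add) (auto intro!: integrable_mult_right integrable_trunc_mean)
  finally show ?thesis .
qed

context
  assumes W_sym: "distr M lborel (\<lambda>\<omega>. - W \<omega>) = distr M lborel W"
begin

lemma trunc_mean_uminus: "trunc_mean M W k n x (- y) = trunc_mean M W k n x y"
proof -
  define f where "f w = indicator {- real n..real n} w * k (x - y * w)" for w
  note convex_on_real_borel_measurable[OF k_convex, measurable]
  have [measurable]: "f \<in> borel_measurable lborel" unfolding f_def by measurable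
  have "trunc_mean M W k n x (- y) = (\<integral>\<omega>. f (W \<omega>) \<partial>M)" unfolding trunc_mean_def f_def by simp
  also have "\<dots> = (\<integral>w. f w \<partial>distr M lborel W)" by (rule integral_distr[symmetric]) auto
  also have "\<dots> = (\<integral>\<omega>. f (- W \<omega>) \<partial>M)" unfolding W_sym[symmetric] by (rule integral_distr) auto
  also have "\<dots> = trunc_mean M W k n x y" unfolding trunc_mean_def f_def
    by (intro Bochner_Integration.integral_cong) (auto simp: indicator_def)
  finally show ?thesis .
qed

lemma trunc_mean_mono:
  assumes "0 \<le> y1" "y1 \<le> y2"
  shows "trunc_mean M W k n x y1 \<le> trunc_mean M W k n x y2"
proof (cases "y2 = 0")
  case False
  with assms have "y2 > 0" by simp
  \<comment> \<open>\<open>y\<^sub>1\<close> is a convex combination of \<open>y\<^sub>2\<close> and \<open>-y\<^sub>2\<close>\<close>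
  define l where "l = (y1 + y2) / (2 * y2)"
  have l: "0 \<le> l" "l \<le> 1" unfolding l_def using assms \<open>y2 > 0\<close> by (auto simp: field_simps)
  have "x = l * x + (1 - l) * x" "y1 = l * y2 + (1 - l) * (- y2)"
    unfolding l_def using \<open>y2 > 0\<close> by (simp_all add: field_simps)
  then have "trunc_mean M W k n x y1 = trunc_mean M W k n (l * x + (1 - l) * x) (l * y2 + (1 - l) * (- y2))"
    by simp
  also have "\<dots> \<le> l * trunc_mean M W k n x y2 + (1 - l) * trunc_mean M W k n x (- y2)"
    by (rule trunc_mean_convex[OF l])
  also have "\<dots> = trunc_mean M W k n x y2" by (simp add: trunc_mean_uminus algebra_simps)
  finally show ?thesis .
qed (use assms in simp)

lemma convex_on_trunc_mean_compose:
  assumes sig: "convex_on UNIV sig" "\<And>s. 0 \<le> sig s"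
  shows "convex_on UNIV (\<lambda>s. trunc_mean M W k n (\<alpha> * s + \<beta>) (sig s))"
  unfolding convex_on_alt
proof (intro conjI ballI allI impI, simp, elim conjE)
  fix s1 s2 l :: real assume l: "0 \<le> l" "l \<le> 1"
  let ?g = "\<lambda>s. trunc_mean M W k n (\<alpha> * s + \<beta>) (sig s)"
  define s where "s = l * s1 + (1 - l) * s2"
  have lin: "\<alpha> * s + \<beta> = l * (\<alpha> * s1 + \<beta>) + (1 - l) * (\<alpha> * s2 + \<beta>)"
    unfolding s_def by (simp add: algebra_simps)
  have "?g s \<le> trunc_mean M W k n (\<alpha> * s + \<beta>) (l * sig s1 + (1 - l) * sig s2)"
    using convex_onD[OF sig(1), of "1 - l" s1 s2] l sig(2)
    unfolding s_def by (intro trunc_mean_mono) auto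
  also have "\<dots> \<le> l * ?g s1 + (1 - l) * ?g s2"
    unfolding lin by (rule trunc_mean_convex[OF l])
  finally show "?g (l *\<^sub>R s1 + (1 - l) *\<^sub>R s2) \<le> l * ?g s1 + (1 - l) * ?g s2"
    unfolding s_def by simp
qed

end

end

lemma (in prob_space) nn_integral_indep_var:
  fixes S W :: "'a \<Rightarrow> real" and f :: "real \<times> real \<Rightarrow> ennreal"
  assumes ind: "indep_var borel S borel W"
    and [measurable]: "f \<in> borel_measurable (borel \<Otimes>\<^sub>M borel)"
  shows "(\<integral>\<^sup>+\<omega>. f (S \<omega>, W \<omega>) \<partial>M) = (\<integral>\<^sup>+\<omega>. (\<integral>\<^sup>+\<omega>'. f (S \<omega>, W \<omega>') \<partial>M) \<partial>M)"
proof -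
  have [measurable]: "S \<in> borel_measurable M" "W \<in> borel_measurable M"
    and joint: "distr M borel S \<Otimes>\<^sub>M distr M borel W = distr M (borel \<Otimes>\<^sub>M borel) (\<lambda>x. (S x, W x))"
    using ind[unfolded indep_var_distribution_eq] by auto
  interpret PW: prob_space "distr M borel W" by (rule prob_space_distr) simp
  define G where "G s = (\<integral>\<^sup>+w. f (s, w) \<partial>distr M borel W)" for s
  have [measurable]: "G \<in> borel_measurable borel"
    unfolding G_def using PW.borel_measurable_nn_integral_fst[of f borel] by simp
  have "(\<integral>\<^sup>+\<omega>. f (S \<omega>, W \<omega>) \<partial>M) = (\<integral>\<^sup>+z. f z \<partial>distr M (borel \<Otimes>\<^sub>M borel) (\<lambda>x. (S x, W x)))"
    by (rule nn_integral_distr[symmetric]) auto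
  also have "\<dots> = (\<integral>\<^sup>+s. G s \<partial>distr M borel S)"
    unfolding joint[symmetric] G_def
    by (rule PW.nn_integral_fst[symmetric])
      (subst measurable_cong_sets[OF sets_pair_measure_cong[OF sets_distr sets_distr] refl]; simp)
  also have "\<dots> = (\<integral>\<^sup>+\<omega>. G (S \<omega>) \<partial>M)"
    by (rule nn_integral_distr) auto
  also have "\<dots> = (\<integral>\<^sup>+\<omega>. (\<integral>\<^sup>+\<omega>'. f (S \<omega>, W \<omega>') \<partial>M) \<partial>M)"
    unfolding G_def by (intro nn_integral_cong nn_integral_distr) auto
  finally show ?thesis .
qed

lemma SUP_indicator_atLeastAtMost_mult:
  fixes v w :: real
  assumes "0 \<le> v"
  shows "(SUP n::nat. ennreal (indicator {- real n..real n} w * v)) = ennreal v"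
proof (rule antisym)
  show "(SUP n. ennreal (indicator {- real n..real n} w * v)) \<le> ennreal v"
    using assms by (intro SUP_least ennreal_leI) (simp add: indicator_def)
  obtain n :: nat where "\<bar>w\<bar> \<le> real n" using real_arch_simple by blast
  then have "ennreal v \<le> ennreal (indicator {- real n..real n} w * v)"
    by (simp add: indicator_def abs_le_iff)
  then show "ennreal v \<le> (SUP n. ennreal (indicator {- real n..real n} w * v))"
    by (rule SUP_upper2[OF UNIV_I])
qed

lemma (in prob_space) nn_integral_noise_SUP_trunc_mean:
  fixes S W :: "'a \<Rightarrow> real" and k lin sig :: "real \<Rightarrow> real"
  assumes ind: "indep_var borel S borel W"
    and k: "convex_on UNIV k" "\<And>t. 0 \<le> k t"
    and [measurable]: "lin \<in> borel_measurable borel" "sig \<in> borel_measurable borel"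
  shows "(\<integral>\<^sup>+\<omega>. k (lin (S \<omega>) + sig (S \<omega>) * W \<omega>) \<partial>M)
     = (SUP n. \<integral>\<^sup>+\<omega>. trunc_mean M W k n (lin (S \<omega>)) (sig (S \<omega>)) \<partial>M)"
proof -
  have [measurable]: "S \<in> borel_measurable M" "W \<in> borel_measurable M"
    using ind[unfolded indep_var_distribution_eq] by auto
  note [measurable] = convex_on_real_borel_measurable[OF k(1)]
  define f where "f n = (\<lambda>(s, w). ennreal (indicator {- real n..real n} w * k (lin s + sig s * w)))"
    for n :: nat
  have [measurable]: "f n \<in> borel_measurable (borel \<Otimes>\<^sub>M borel)" for n
    unfolding f_def by measurable
  have "(\<integral>\<^sup>+\<omega>. k (lin (S \<omega>) + sig (S \<omega>) * W \<omega>) \<partial>M) = (\<integral>\<^sup>+\<omega>. (SUP n. f n (S \<omega>, W \<omega>)) \<partial>M)"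
    by (simp add: f_def SUP_indicator_atLeastAtMost_mult k(2))
  also have "\<dots> = (SUP n. \<integral>\<^sup>+\<omega>. f n (S \<omega>, W \<omega>) \<partial>M)"
  proof (rule nn_integral_monotone_convergence_SUP)
    show "incseq (\<lambda>n \<omega>. f n (S \<omega>, W \<omega>))"
      unfolding f_def by (intro incseq_SucI le_funI ennreal_leI mult_right_mono) (auto simp: indicator_def k(2))
  qed measurable
  also have "\<dots> = (SUP n. \<integral>\<^sup>+\<omega>. (\<integral>\<^sup>+\<omega>'. f n (S \<omega>, W \<omega>') \<partial>M) \<partial>M)"
    by (intro SUP_cong refl nn_integral_indep_var[OF ind]) measurable
  also have "\<dots> = (SUP n. \<integral>\<^sup>+\<omega>. trunc_mean M W k n (lin (S \<omega>)) (sig (S \<omega>)) \<partial>M)"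
    unfolding trunc_mean_def f_def
    using integrable_trunc_mean[OF finite_measure_axioms _ k(1)] k(2)
    by (simp add: nn_integral_eq_integral)
  finally show ?thesis .
qed

lemma (in prob_space) integral_affine_plus_noise:
  fixes S W :: "'a \<Rightarrow> real" and sig :: "real \<Rightarrow> real"
  assumes ind: "indep_var borel S borel W" and S_int: "integrable M S"
    and W_int: "integrable M W" and W_mean: "(\<integral>\<omega>. W \<omega> \<partial>M) = 0"
    and [measurable]: "sig \<in> borel_measurable borel" and sig_growth: "\<And>s. \<bar>sig s\<bar> \<le> C * (\<bar>s\<bar> + 1)"
  shows "integrable M (\<lambda>\<omega>. \<alpha> * S \<omega> + \<beta> + sig (S \<omega>) * W \<omega>)"
    and "(\<integral>\<omega>. \<alpha> * S \<omega> + \<beta> + sig (S \<omega>) * W \<omega> \<partial>M) = \<alpha> * (\<integral>\<omega>. S \<omega> \<partial>M) + \<beta>"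
proof -
  have [measurable]: "S \<in> borel_measurable M" using S_int by auto
  have sig_int: "integrable M (\<lambda>\<omega>. sig (S \<omega>))"
  proof (rule Bochner_Integration.integrable_bound)
    show "integrable M (\<lambda>\<omega>. C * (\<bar>S \<omega>\<bar> + 1))"
      using S_int by (intro integrable_mult_right Bochner_Integration.integrable_add integrable_abs) auto
    have "\<bar>sig s\<bar> \<le> \<bar>C\<bar> * (\<bar>s\<bar> + 1)" for s
      using sig_growth[of s] mult_right_mono[OF abs_ge_self, of "\<bar>s\<bar> + 1" C] by simp
    then show "AE \<omega> in M. norm (sig (S \<omega>)) \<le> norm (C * (\<bar>S \<omega>\<bar> + 1))"
      by (simp add: abs_mult)
  qed measurable
  have ind_sig: "indep_var borel (\<lambda>\<omega>. sig (S \<omega>)) borel W"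
    using indep_var_compose[OF ind, of sig borel id borel] by (simp add: comp_def)
  have noise_int: "integrable M (\<lambda>\<omega>. sig (S \<omega>) * W \<omega>)"
    by (rule indep_var_integrable[OF ind_sig sig_int W_int])
  have "(\<integral>\<omega>. sig (S \<omega>) * W \<omega> \<partial>M) = 0"
    using indep_var_lebesgue_integral[OF ind_sig sig_int W_int] W_mean by simp
  with noise_int S_int show "integrable M (\<lambda>\<omega>. \<alpha> * S \<omega> + \<beta> + sig (S \<omega>) * W \<omega>)"
    and "(\<integral>\<omega>. \<alpha> * S \<omega> + \<beta> + sig (S \<omega>) * W \<omega> \<partial>M) = \<alpha> * (\<integral>\<omega>. S \<omega> \<partial>M) + \<beta>"
    by (simp_all add: prob_space)
qed

lemma (in prob_space) convex_order_le_affine_plus_noise: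
  fixes S1 S2 W :: "'a \<Rightarrow> real" and sig :: "real \<Rightarrow> real"
  assumes W_sym: "distr M lborel (\<lambda>\<omega>. - W \<omega>) = distr M lborel W"
    and W_int: "integrable M W" and W_mean: "(\<integral>\<omega>. W \<omega> \<partial>M) = 0"
    and sig_convex: "convex_on UNIV sig" and sig_nonneg: "\<And>s. 0 \<le> sig s"
    and sig_growth: "\<And>s. sig s \<le> C * (\<bar>s\<bar> + 1)"
    and ind1: "indep_var borel S1 borel W" and S1_int: "integrable M S1"
    and ind2: "indep_var borel S2 borel W" and S2_int: "integrable M S2"
    and order: "convex_order_le M S1 S2"
  shows "convex_order_le M (\<lambda>\<omega>. \<alpha> * S1 \<omega> + \<beta> + sig (S1 \<omega>) * W \<omega>)
                           (\<lambda>\<omega>. \<alpha> * S2 \<omega> + \<beta> + sig (S2 \<omega>) * W \<omega>)"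
proof (rule convex_order_leI)
  have [measurable]: "W \<in> borel_measurable M" "S1 \<in> borel_measurable M" "S2 \<in> borel_measurable M"
    "sig \<in> borel_measurable borel"
    using W_int S1_int S2_int convex_on_real_borel_measurable[OF sig_convex] by auto
  have sig_abs_growth: "\<bar>sig s\<bar> \<le> C * (\<bar>s\<bar> + 1)" for s
    using sig_nonneg[of s] sig_growth[of s] by simp
  note mean1 = integral_affine_plus_noise[OF ind1 S1_int W_int W_mean _ sig_abs_growth]
  note mean2 = integral_affine_plus_noise[OF ind2 S2_int W_int W_mean _ sig_abs_growth]
  show "integrable M (\<lambda>\<omega>. \<alpha> * S1 \<omega> + \<beta> + sig (S1 \<omega>) * W \<omega>)"
    "integrable M (\<lambda>\<omega>. \<alpha> * S2 \<omega> + \<beta> + sig (S2 \<omega>) * W \<omega>)"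
    using mean1 mean2 by simp_all
  show "(\<integral>\<omega>. \<alpha> * S1 \<omega> + \<beta> + sig (S1 \<omega>) * W \<omega> \<partial>M) = (\<integral>\<omega>. \<alpha> * S2 \<omega> + \<beta> + sig (S2 \<omega>) * W \<omega> \<partial>M)"
    using mean1 mean2 convex_order_le_integral_eq[OF order S1_int S2_int] by simp
  fix k :: "real \<Rightarrow> real" assume k: "convex_on UNIV k" "\<And>t. 0 \<le> k t"
  let ?g = "\<lambda>n s. trunc_mean M W k n (\<alpha> * s + \<beta>) (sig s)"
  have g_le: "(\<integral>\<^sup>+\<omega>. ?g n (S1 \<omega>) \<partial>M) \<le> (\<integral>\<^sup>+\<omega>. ?g n (S2 \<omega>) \<partial>M)" for n
    using convex_on_trunc_mean_compose[OF finite_measure_axioms _ k(1) W_sym sig_convex sig_nonneg]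
      trunc_mean_nonneg[OF finite_measure_axioms _ k(1) k(2)]
    by (intro convex_order_le_nn_integral[OF order]) simp_all
  have noise_eq: "(\<integral>\<^sup>+\<omega>. k (\<alpha> * S \<omega> + \<beta> + sig (S \<omega>) * W \<omega>) \<partial>M) = (SUP n. \<integral>\<^sup>+\<omega>. ?g n (S \<omega>) \<partial>M)"
    if "indep_var borel S borel W" for S
    using nn_integral_noise_SUP_trunc_mean[OF that k, of "\<lambda>s. \<alpha> * s + \<beta>" sig] by simp
  show "(\<integral>\<^sup>+\<omega>. k (\<alpha> * S1 \<omega> + \<beta> + sig (S1 \<omega>) * W \<omega>) \<partial>M)
      \<le> (\<integral>\<^sup>+\<omega>. k (\<alpha> * S2 \<omega> + \<beta> + sig (S2 \<omega>) * W \<omega>) \<partial>M)"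
    unfolding noise_eq[OF ind1] noise_eq[OF ind2] by (intro SUP_mono) (use g_le in blast)
qed

lemma (in prob_space) normal_distributed_symmetric:
  assumes "distributed M lborel W (normal_density 0 \<sigma>)" "0 < \<sigma>"
  shows "distr M lborel (\<lambda>\<omega>. - W \<omega>) = distr M lborel W"
proof -
  have "distributed M lborel (\<lambda>\<omega>. 0 + (- 1) * W \<omega>) (normal_density (0 + (- 1) * 0) (\<bar>- 1\<bar> * \<sigma>))"
    by (rule normal_density_affine[OF assms]) simp
  then show ?thesis
    using distributed_distr_eq_density[OF assms(1)] distributed_distr_eq_density by simp
qed

theorem mainTheorem3:
  fixes M :: "'w measure" and S1 S2 W :: "'w \<Rightarrow> real"
    and \<theta> a \<mu> \<Delta> :: real
  assumes "prob_space M"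
    and "\<theta> > 0" and "a > 0" and "\<Delta> > 0"
    and "distributed M lborel W (normal_density 0 (sqrt \<Delta>))"
    and "S1 \<in> borel_measurable M" and "S2 \<in> borel_measurable M"
    and "prob_space.indep_var M borel S1 borel W"
    and "prob_space.indep_var M borel S2 borel W"
    and "integrable M S1" and "integrable M S2"
    and "\<forall>h::real \<Rightarrow> real. convex_on UNIV h \<longrightarrow>
           ext_expectation M (\<lambda>\<omega>. h (S1 \<omega>)) \<le> ext_expectation M (\<lambda>\<omega>. h (S2 \<omega>))"
  shows "\<forall>h::real \<Rightarrow> real. convex_on UNIV h \<longrightarrow>
           ext_expectation M (\<lambda>\<omega>. h (step_op \<theta> a \<mu> \<Delta> W S1 \<omega>))
             \<le> ext_expectation M (\<lambda>\<omega>. h (step_op \<theta> a \<mu> \<Delta> W S2 \<omega>))"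
proof -
  interpret prob_space M by fact
  have sd: "0 < sqrt \<Delta>" and \<theta>a: "0 \<le> \<theta> * a" using assms(2-4) by simp_all
  have W_int: "integrable M W"
    using distributed_integrable[OF assms(5), of "\<lambda>x. x"] integrable_normal_moment_nz_1 sd by simp
  have step: "step_op \<theta> a \<mu> \<Delta> W S
      = (\<lambda>\<omega>. (1 - \<Delta> * \<theta>) * S \<omega> + \<Delta> * \<theta> * \<mu> + sigma_hat \<theta> a (S \<omega>) * W \<omega>)" for S
    by (simp add: step_op_def drift_b_def fun_eq_iff algebra_simps)
  have "convex_order_le M (step_op \<theta> a \<mu> \<Delta> W S1) (step_op \<theta> a \<mu> \<Delta> W S2)"
    unfolding step
    by (rule convex_order_le_affine_plus_noise[OF normal_distributed_symmetric[OF assms(5) sd] W_int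
          normal_distributed_expectation[OF sd assms(5)] convex_on_sigma_hat[OF \<theta>a]
          sigma_hat_nonneg[OF \<theta>a] sigma_hat_le[OF \<theta>a] assms(8,10,9,11)])
      (simp add: convex_order_le_def assms(12))
  then show ?thesis by (simp add: convex_order_le_def)
qed

end
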